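(* Let $n\geq 2$. For every $\sigma\in(0,1)$ there exists a Caccioppoli set $E\subset\mathbb{R}^n$ such that \[ P_s(E)<\infty\quad\forall\,s\in(0,\sigma)\qquad\text{and}\qquad P_s(E)=\infty\quad\forall\,s\in[\sigma,1). \]
   Context: A Caccioppoli set is a set of locally finite (classical) perimeter, i.e. $\chi_E\in BV_{loc}(\mathbb{R}^n)$. For $s\in(0,1)$, $P_s(E):=\int_E\int_{\mathbb{R}^n\setminus E}|x-y|^{-n-s}\,dx\,dy$ is the $s$-fractional perimeter of $E$ in $\mathbb{R}^n$. *)

theory Defs
  imports "HOL-Analysis.Analysis"
begin

definition C1c_field :: "(real^'n) set \<Rightarrow> (real^'n \<Rightarrow> real^'n) \<Rightarrow> bool" where
  "C1c_field U \<phi> \<longleftrightarrow>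
     (\<exists>D. (\<forall>x. (\<phi> has_derivative D x) (at x)) \<and> (\<forall>v. continuous_on UNIV (\<lambda>x. D x v)))
     \<and> compact (closure {x. \<phi> x \<noteq> 0}) \<and> closure {x. \<phi> x \<noteq> 0} \<subseteq> U"

definition divergence :: "(real^'n \<Rightarrow> real^'n) \<Rightarrow> real^'n \<Rightarrow> real" where
  "divergence \<phi> x = (\<Sum>i\<in>UNIV. (frechet_derivative \<phi> (at x) (axis i 1)) $ i)"

text \<open>Caccioppoli set: chi_E in BV_loc, i.e. E measurable and its (distributional)
  perimeter in every ball is finite.\<close>
definition caccioppoli :: "(real^'n) set \<Rightarrow> bool" where
  "caccioppoli E \<longleftrightarrow> E \<in> sets lebesgue \<and>
     (\<forall>r::real. \<exists>B::real. \<forall>\<phi>. C1c_field (ball 0 r) \<phi> \<and> (\<forall>x. norm (\<phi> x) \<le> 1)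
        \<longrightarrow> integral E (divergence \<phi>) \<le> B)"

definition frac_perimeter :: "real \<Rightarrow> (real^'n) set \<Rightarrow> ennreal" where
  "frac_perimeter s E = (\<integral>\<^sup>+ x. \<integral>\<^sup>+ y. indicator E x * indicator (- E) y *
      ennreal (norm (x - y) powr (- (real CARD('n) + s))) \<partial>lebesgue \<partial>lebesgue)"

end

theory Submission
  imports Defs
begin

text \<open>The set is a union of disjoint open cubes \<open>Q\<^sub>k\<close> of side
  \<open>r\<^sub>k = (k + 1) powr (-1 / (n - \<sigma>))\<close>, strung out along a coordinate axis.
  A cube of side \<open>r\<close> has \<open>s\<close>-perimeter at most \<open>C r^(n - s)\<close> (decompose both the kernel and
  the distance to the boundary dyadically), so \<open>P\<^sub>s(E) \<le> C \<Sum> r\<^sub>k^(n - s)\<close>, and this series converges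
  exactly when \<open>s < \<sigma>\<close>. Conversely, the translate of \<open>Q\<^sub>k\<close> by its side length lies outside the set
  and within distance \<open>2 n r\<^sub>k\<close> of \<open>Q\<^sub>k\<close>, which gives \<open>P\<^sub>s(E) \<ge> c \<Sum> r\<^sub>k^(n - s) = \<infinity>\<close> for
  \<open>s \<ge> \<sigma>\<close>. Finally, a ball meets only finitely many cubes, and on a finite union of cubes the
  divergence of a test field integrates to at most the measure of the symmetric difference with
  small translates, which is linear in the translation.\<close>

section \<open>Comparison principles for the fractional perimeter\<close>

lemma frac_perimeter_lborel:
  "frac_perimeter s E = (\<integral>\<^sup>+x. \<integral>\<^sup>+y. indicator E x * indicator (- E) y *
      ennreal (norm (x - y) powr - (real CARD('n) + s)) \<partial>lborel \<partial>lborel)"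
  for E :: "(real^'n) set"
  unfolding frac_perimeter_def by (simp add: nn_integral_completion)

lemma frac_perimeter_UN_le:
  fixes A :: "nat \<Rightarrow> (real^'n) set"
  assumes [measurable]: "\<And>k. A k \<in> sets borel"
  shows "frac_perimeter s (\<Union>k. A k) \<le> (\<Sum>k. frac_perimeter s (A k))"
proof -
  define K where "K x y = ennreal (norm (x - y) powr - (real CARD('n) + s))" for x y :: "real^'n"
  have [measurable]: "(\<lambda>(x, y). K x y) \<in> borel_measurable (lborel \<Otimes>\<^sub>M lborel)"
    unfolding K_def by measurable
  have pointwise: "indicator (\<Union>k. A k) x * indicator (- (\<Union>k. A k)) y * K x y
      \<le> (\<Sum>k. indicator (A k) x * indicator (- A k) y * K x y)" for x y
  proof (cases "x \<in> (\<Union>k. A k) \<and> y \<notin> (\<Union>k. A k)")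
    case True
    then obtain k where k: "x \<in> A k" "y \<notin> A k" by blast
    have "(\<Sum>j\<in>{k}. indicator (A j) x * indicator (- A j) y * K x y)
        \<le> (\<Sum>j. indicator (A j) x * indicator (- A j) y * K x y)"
      by (rule sum_le_suminf) auto
    then show ?thesis using True k by simp
  qed (auto split: split_indicator)
  have "frac_perimeter s (\<Union>k. A k)
      \<le> (\<integral>\<^sup>+x. \<integral>\<^sup>+y. (\<Sum>k. indicator (A k) x * indicator (- A k) y * K x y) \<partial>lborel \<partial>lborel)"
    unfolding frac_perimeter_lborel K_def[symmetric] by (intro nn_integral_mono pointwise)
  also have "\<dots> = (\<integral>\<^sup>+x. (\<Sum>k. \<integral>\<^sup>+y. indicator (A k) x * indicator (- A k) y * K x y \<partial>lborel) \<partial>lborel)"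
    by (intro nn_integral_cong nn_integral_suminf) measurable
  also have "\<dots> = (\<Sum>k. \<integral>\<^sup>+x. \<integral>\<^sup>+y. indicator (A k) x * indicator (- A k) y * K x y \<partial>lborel \<partial>lborel)"
    by (rule nn_integral_suminf) measurable
  also have "\<dots> = (\<Sum>k. frac_perimeter s (A k))"
    unfolding frac_perimeter_lborel K_def ..
  finally show ?thesis .
qed

lemma frac_perimeter_ge_suminf:
  fixes A B :: "nat \<Rightarrow> (real^'n) set" and E :: "(real^'n) set"
  assumes disj: "disjoint_family A" and AE: "\<And>k. A k \<subseteq> E" and BE: "\<And>k. B k \<inter> E = {}"
    and [measurable]: "\<And>k. A k \<in> sets borel" "\<And>k. B k \<in> sets borel"
    and d: "\<And>k x y. x \<in> A k \<Longrightarrow> y \<in> B k \<Longrightarrow> norm (x - y) \<le> d k"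
    and s: "0 \<le> s"
  shows "(\<Sum>k. ennreal (d k powr - (real CARD('n) + s)) * emeasure lborel (A k) * emeasure lborel (B k))
    \<le> frac_perimeter s E"
proof -
  define K where "K x y = ennreal (norm (x - y) powr - (real CARD('n) + s))" for x y :: "real^'n"
  define c where "c k = ennreal (d k powr - (real CARD('n) + s))" for k
  have pointwise: "(\<Sum>k. c k * indicator (A k) x * indicator (B k) y)
      \<le> indicator E x * indicator (- E) y * K x y" for x y
  proof (cases "\<exists>k. x \<in> A k")
    case True
    then obtain k where k: "x \<in> A k" by blast
    have "(\<Sum>j. c j * indicator (A j) x * indicator (B j) y) = (\<Sum>j\<in>{k}. c j * indicator (A j) x * indicator (B j) y)"
      using disj k by (intro suminf_finite) (auto simp: disjoint_family_on_def split: split_indicator)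
    also have "\<dots> \<le> indicator E x * indicator (- E) y * K x y"
    proof (cases "y \<in> B k")
      case True
      then have "x \<in> E" "y \<notin> E" using k AE BE by blast+
      then have "0 < norm (x - y)" by auto
      then have "d k powr - (real CARD('n) + s) \<le> norm (x - y) powr - (real CARD('n) + s)"
        using d[OF k True] s by (intro powr_mono2') auto
      then show ?thesis using k True \<open>x \<in> E\<close> \<open>y \<notin> E\<close> by (simp add: c_def K_def ennreal_leI)
    qed (use k in simp)
    finally show ?thesis .
  qed simp
  have "(\<Sum>k. c k * emeasure lborel (A k) * emeasure lborel (B k))
      = (\<integral>\<^sup>+x. \<integral>\<^sup>+y. (\<Sum>k. c k * indicator (A k) x * indicator (B k) y) \<partial>lborel \<partial>lborel)"
    by (simp add: nn_integral_suminf nn_integral_cmult nn_integral_multc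
        nn_integral_cmult_indicator mult.assoc)
  also have "\<dots> \<le> frac_perimeter s E"
    unfolding frac_perimeter_lborel K_def[symmetric] by (intro nn_integral_mono pointwise)
  finally show ?thesis by (simp add: c_def)
qed

section \<open>The fractional perimeter of a cube\<close>

abbreviation open_cube :: "real^'n \<Rightarrow> real \<Rightarrow> (real^'n) set" where
  "open_cube a r \<equiv> box a (a + vec r)"

lemma ex_dyadic_bracket:
  fixes q :: real
  assumes "1 \<le> q"
  shows "\<exists>j::nat. 2^j \<le> q \<and> q < 2^Suc j"
proof -
  have ex: "\<exists>j::nat. q < 2^Suc j"
    using real_arch_pow[of 2 q] by (metis less_trans lessI one_less_numeral_iff power_strict_increasing_iff semiring_norm(76))
  define j where "j = (LEAST j::nat. q < 2^Suc j)"
  have j: "q < 2^Suc j" unfolding j_def by (rule LeastI_ex[OF ex])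
  have "2^j \<le> q"
  proof (cases j)
    case (Suc m)
    then have "\<not> q < 2^Suc m" using not_less_Least[of m "\<lambda>j. q < 2^Suc j"] j_def by simp
    then show ?thesis using Suc by simp
  qed (use assms in simp)
  with j show ?thesis by blast
qed

lemma le_suminf_indicator_cover:
  fixes f :: "'a \<Rightarrow> ennreal" and S :: "nat \<Rightarrow> 'a set" and c :: "nat \<Rightarrow> ennreal"
  assumes "\<And>x. f x \<noteq> 0 \<Longrightarrow> \<exists>j. x \<in> S j \<and> f x \<le> c j"
  shows "f x \<le> (\<Sum>j. c j * indicator (S j) x)"
proof (cases "f x = 0")
  case False
  then obtain j where j: "x \<in> S j" "f x \<le> c j" using assms by blast
  have "(\<Sum>j\<in>{j}. c j * indicator (S j) x) \<le> (\<Sum>j. c j * indicator (S j) x)"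
    by (rule sum_le_suminf) auto
  then show ?thesis using j by simp
qed simp

lemma nn_integral_suminf_indicator:
  assumes "\<And>j. S j \<in> sets M"
  shows "(\<integral>\<^sup>+x. (\<Sum>j. c j * indicator (S j) x) \<partial>M) = (\<Sum>j. c j * emeasure M (S j))"
  using assms by (subst nn_integral_suminf) (auto simp: nn_integral_cmult_indicator)

lemma suminf_geometric_ennreal:
  assumes "0 \<le> c" "0 \<le> q" "q < 1"
  shows "(\<Sum>j. ennreal (c * q^j)) = ennreal (c / (1 - q))"
proof (rule suminf_ennreal_eq)
  show "(\<lambda>j. c * q^j) sums (c / (1 - q))"
    using sums_mult[OF geometric_sums[of q], of c] assms by simp
qed (use assms in simp)

lemma dyadic_shell_term_eq:
  fixes \<delta> s :: real and N j :: nat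
  assumes "0 < \<delta>"
  shows "(2^j * \<delta>) powr (- (real N + s)) * (2^Suc j * \<delta>)^N = 2^N * \<delta> powr (-s) * (2 powr (-s))^j"
proof -
  define t where "t = 2^j * \<delta>"
  have t: "0 < t" using assms by (simp add: t_def)
  have "(2^Suc j * \<delta>)^N = 2^N * t powr N" using t by (simp add: t_def powr_realpow power_mult_distrib)
  then have "(2^j * \<delta>) powr (- (real N + s)) * (2^Suc j * \<delta>)^N = 2^N * (t powr (- (real N + s)) * t powr N)"
    by (simp add: t_def)
  also have "t powr (- (real N + s)) * t powr N = t powr (-s)" by (simp add: powr_add[symmetric])
  also have "t powr (-s) = \<delta> powr (-s) * (2 powr (-s))^j"
  proof -
    have "(2 powr real j) powr - s = (2 powr - s) powr real j" by (simp add: powr_powr mult.commute)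
    then show ?thesis using assms by (simp add: t_def powr_mult powr_realpow[symmetric])
  qed
  finally show ?thesis by simp
qed

text \<open>Cover the region \<open>norm (x - y) \<ge> \<delta>\<close> by the dyadic shells
  \<open>2^j \<delta> \<le> norm (x - y) < 2^(j+1) \<delta>\<close>; the contributions form a geometric series.\<close>

lemma nn_integral_kernel_outside_ball_le:
  fixes x :: "real^'n"
  assumes "0 < \<delta>" "0 < s"
  shows "(\<integral>\<^sup>+y. indicator {y. \<delta> \<le> norm (x - y)} y * ennreal (norm (x - y) powr - (real CARD('n) + s)) \<partial>lborel)
    \<le> ennreal (unit_ball_vol (real CARD('n)) * 2^CARD('n) / (1 - 2 powr (-s)) * \<delta> powr (-s))"
proof -
  define N where "N = CARD('n)"
  define p where "p = real N + s"
  define V where "V = unit_ball_vol (real N)"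
  define S where "S j = {y. 2^j * \<delta> \<le> norm (x - y)} \<inter> ball x (2^Suc j * \<delta>)" for j :: nat
  define c where "c j = ennreal ((2^j * \<delta>) powr (-p))" for j :: nat
  let ?f = "\<lambda>y. indicator {y. \<delta> \<le> norm (x - y)} y * ennreal (norm (x - y) powr (-p))"
  have pt: "?f y \<le> (\<Sum>j. c j * indicator (S j) y)" for y
  proof (rule le_suminf_indicator_cover)
    fix y assume "?f y \<noteq> 0"
    then have d: "\<delta> \<le> norm (x - y)" by (cases "\<delta> \<le> norm (x - y)") auto
    then obtain j where j: "2^j \<le> norm (x - y) / \<delta>" "norm (x - y) / \<delta> < 2^Suc j"
      using ex_dyadic_bracket[of "norm (x - y) / \<delta>"] assms by auto
    have j': "2^j * \<delta> \<le> norm (x - y)" "norm (x - y) < 2^Suc j * \<delta>"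
      using j assms by (auto simp: field_simps)
    have "y \<in> S j" using j' by (simp add: S_def dist_norm)
    moreover have "norm (x - y) powr (-p) \<le> (2^j * \<delta>) powr (-p)"
      using j' assms by (intro powr_mono2') (auto simp: p_def)
    ultimately show "\<exists>j. y \<in> S j \<and> ?f y \<le> c j" using d
      by (intro exI[of _ j]) (auto simp: c_def)
  qed
  have meas: "S j \<in> sets lborel" for j
    unfolding S_def by (intro sets.Int) (auto intro!: borel_closed closed_Collect_le continuous_intros)
  have "(\<integral>\<^sup>+y. ?f y \<partial>lborel) \<le> (\<integral>\<^sup>+y. (\<Sum>j. c j * indicator (S j) y) \<partial>lborel)"
    by (intro nn_integral_mono pt)
  also have "\<dots> = (\<Sum>j. c j * emeasure lborel (S j))" by (rule nn_integral_suminf_indicator[OF meas])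
  also have "\<dots> \<le> (\<Sum>j. ennreal (V * 2^N * \<delta> powr (-s) * (2 powr (-s))^j))"
  proof (intro suminf_le allI)
    fix j
    have "emeasure lborel (S j) \<le> emeasure lborel (ball x (2^Suc j * \<delta>))"
      by (intro emeasure_mono) (auto simp: S_def)
    also have "\<dots> = ennreal (V * (2^Suc j * \<delta>)^N)"
      using emeasure_ball[where c=x and r="2^Suc j * \<delta>"] assms by (simp add: V_def N_def)
    finally have "c j * emeasure lborel (S j) \<le> c j * ennreal (V * (2^Suc j * \<delta>)^N)"
      by (rule mult_left_mono) simp
    also have "\<dots> = ennreal (V * 2^N * \<delta> powr (-s) * (2 powr (-s))^j)"
      unfolding c_def using assms dyadic_shell_term_eq[OF assms(1), of j N s]
      by (simp add: ennreal_mult'[symmetric] V_def p_def mult_ac)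
    finally show "c j * emeasure lborel (S j) \<le> ennreal (V * 2^N * \<delta> powr (-s) * (2 powr (-s))^j)" .
  qed auto
  also have "\<dots> = ennreal (V * 2^N * \<delta> powr (-s) / (1 - 2 powr (-s)))"
    using assms by (intro suminf_geometric_ennreal) (auto simp: V_def powr_less_one)
  finally show ?thesis by (simp add: p_def N_def V_def)
qed

lemma emeasure_lborel_box_cart:
  fixes a b :: "real^'n"
  assumes "\<And>i. a$i \<le> b$i"
  shows "emeasure lborel (box a b) = ennreal (\<Prod>i\<in>UNIV. b$i - a$i)"
    and "emeasure lborel (cbox a b) = ennreal (\<Prod>i\<in>UNIV. b$i - a$i)"
proof -
  have eq: "(\<Prod>b'\<in>Basis. (b - a) \<bullet> b') = (\<Prod>i\<in>UNIV. b$i - a$i)"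
    by (simp add: Basis_vec_def cart_eq_inner_axis axis_eq_axis prod.UNION_disjoint inner_diff_left)
  have "\<forall>b'\<in>Basis. a \<bullet> b' \<le> b \<bullet> b'" using assms
    by (auto simp: Basis_vec_def cart_eq_inner_axis)
  then show "emeasure lborel (box a b) = ennreal (\<Prod>i\<in>UNIV. b$i - a$i)"
    "emeasure lborel (cbox a b) = ennreal (\<Prod>i\<in>UNIV. b$i - a$i)"
    by (simp_all add: emeasure_lborel_box_eq emeasure_lborel_cbox_eq eq)
qed

lemma prod_if_eq_single:
  "(\<Prod>k\<in>UNIV. if k = (i::'n::finite) then t else r) = t * r^(CARD('n) - 1)"
proof -
  have "(\<Prod>k\<in>UNIV. if k = i then t else r) = t * (\<Prod>k\<in>UNIV - {i}. if k = i then t else r)"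
    by (subst prod.remove[of _ i]) auto
  also have "(\<Prod>k\<in>UNIV - {i}. if k = i then t else r) = r ^ (CARD('n) - 1)"
    by (simp add: card_Diff_singleton)
  finally show ?thesis .
qed

definition lower_slab :: "real^'n \<Rightarrow> real \<Rightarrow> 'n \<Rightarrow> real \<Rightarrow> (real^'n) set" where
  "lower_slab a r i t = cbox a (\<chi> k. if k = i then a$k + t else a$k + r)"

definition upper_slab :: "real^'n \<Rightarrow> real \<Rightarrow> 'n \<Rightarrow> real \<Rightarrow> (real^'n) set" where
  "upper_slab a r i t = cbox (\<chi> k. if k = i then a$k + r - t else a$k) (a + vec r)"

lemma emeasure_slab:
  fixes a :: "real^'n"
  assumes "0 \<le> t" "t \<le> r"
  shows "emeasure lborel (lower_slab a r i t) = ennreal (t * r^(CARD('n) - 1))"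
    and "emeasure lborel (upper_slab a r i t) = ennreal (t * r^(CARD('n) - 1))"
proof -
  have "emeasure lborel (lower_slab a r i t) = ennreal (\<Prod>k\<in>UNIV. if k = i then t else r)"
    "emeasure lborel (upper_slab a r i t) = ennreal (\<Prod>k\<in>UNIV. if k = i then t else r)"
    unfolding lower_slab_def upper_slab_def using assms
    by (subst emeasure_lborel_box_cart(2); auto intro!: arg_cong[where f=ennreal] prod.cong)+
  then show "emeasure lborel (lower_slab a r i t) = ennreal (t * r^(CARD('n) - 1))"
    "emeasure lborel (upper_slab a r i t) = ennreal (t * r^(CARD('n) - 1))"
    by (simp_all add: prod_if_eq_single)
qed

definition cube_boundary_dist :: "real^'n \<Rightarrow> real \<Rightarrow> real^'n \<Rightarrow> real" where
  "cube_boundary_dist a r x = Min (range (\<lambda>i. min (x$i - a$i) (a$i + r - x$i)))"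

lemma cube_boundary_dist_le:
  "cube_boundary_dist a r x \<le> x$i - a$i" "cube_boundary_dist a r x \<le> a$i + r - x$i"
proof -
  have "cube_boundary_dist a r x \<le> min (x$i - a$i) (a$i + r - x$i)"
    unfolding cube_boundary_dist_def by (rule Min_le) auto
  then show "cube_boundary_dist a r x \<le> x$i - a$i" "cube_boundary_dist a r x \<le> a$i + r - x$i"
    by auto
qed

lemma cube_boundary_dist_attained:
  "\<exists>i. cube_boundary_dist a r x = x$i - a$i \<or> cube_boundary_dist a r x = a$i + r - x$i"
proof -
  have "cube_boundary_dist a r x \<in> range (\<lambda>i. min (x$i - a$i) (a$i + r - x$i))"
    unfolding cube_boundary_dist_def by (rule Min_in) auto
  then show ?thesis by (auto simp: min_def split: if_splits)
qed

lemma cube_boundary_dist_pos: "x \<in> open_cube a r \<Longrightarrow> 0 < cube_boundary_dist a r x"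
  using cube_boundary_dist_attained[of a r x] by (auto simp: mem_box_cart)

lemma cube_boundary_dist_le_half: "cube_boundary_dist a r x \<le> r / 2"
  using cube_boundary_dist_le[of a r x undefined] by linarith

lemma cube_boundary_dist_le_dist:
  assumes "x \<in> open_cube a r" "y \<notin> open_cube a r"
  shows "cube_boundary_dist a r x \<le> norm (x - y)"
proof -
  from assms(2) obtain i where "y$i \<le> a$i \<or> a$i + r \<le> y$i" by (auto simp: mem_box_cart not_less)
  then have "cube_boundary_dist a r x \<le> \<bar>(x - y)$i\<bar>"
    using cube_boundary_dist_le[of a r x i] by auto
  also have "\<dots> \<le> norm (x - y)" by (rule component_le_norm_cart)
  finally show ?thesis .
qed

lemma slab_layer_term_eq:
  fixes r s C :: real and N j :: nat
  assumes "0 < r" "1 \<le> N"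
  shows "C * (r / 2^Suc j) powr (-s) * (2 * real N * ((r / 2^j) * r^(N - 1)))
       = C * 2 * real N * 2 powr s * r powr (real N - s) * (2 powr (s - 1))^j"
proof -
  have e: "((2::real)^Suc j) powr s = 2 powr s * (2 powr s)^j"
  proof -
    have "((2::real)^Suc j) powr s = (2 powr (real (Suc j))) powr s" by (simp only: powr_realpow)
    also have "\<dots> = 2 powr (s + real j * s)" by (simp add: powr_powr algebra_simps)
    also have "\<dots> = 2 powr s * (2 powr s)^j" by (simp add: powr_add powr_power)
    finally show ?thesis .
  qed
  have a: "(r / 2^Suc j) powr (-s) = r powr (-s) * 2 powr s * (2 powr s)^j"
    using e by (simp add: powr_divide powr_minus field_simps)
  have b: "(r / 2^j) * r^(N - 1) = r^N / 2^j"
    using assms by (cases N) auto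
  have c: "r powr (-s) * r^N = r powr (real N - s)"
    using assms by (simp add: powr_realpow[symmetric] powr_add[symmetric])
  have d: "(2 powr s)^j / 2^j = (2 powr (s - 1))^j"
    by (simp add: powr_diff power_divide)
  show ?thesis
    unfolding a b using c d by (simp add: field_simps)
qed

text \<open>Layer-cake estimate: where \<open>cube_boundary_dist\<close> lies in \<open>(r / 2^(j+1), r / 2^j]\<close>,
  the point is in one of \<open>2 n\<close> slabs of width \<open>r / 2^j\<close>.\<close>

lemma nn_integral_cube_boundary_dist_powr_le:
  fixes a :: "real^'n"
  assumes r: "0 < r" and s: "0 < s" "s < 1" and C: "0 \<le> C"
  shows "(\<integral>\<^sup>+x. indicator (open_cube a r) x * ennreal (C * cube_boundary_dist a r x powr (-s)) \<partial>lborel)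
    \<le> ennreal (C * 2 * real CARD('n) * 2 powr s / (1 - 2 powr (s - 1)) * r powr (real CARD('n) - s))"
proof -
  define N where "N = CARD('n)"
  have N1: "1 \<le> N" by (simp add: N_def Suc_leI)
  define Q where "Q = open_cube a r"
  define Sl where "Sl j = (\<Union>i. lower_slab a r i (r / 2^j) \<union> upper_slab a r i (r / 2^j))" for j :: nat
  define cc where "cc j = ennreal (C * (r / 2^Suc j) powr (-s))" for j :: nat
  have Slm: "Sl j \<in> sets lborel" for j
    unfolding Sl_def lower_slab_def upper_slab_def by (intro sets.countable_UN' sets.Un) auto
  have pt: "indicator Q x * ennreal (C * cube_boundary_dist a r x powr (-s)) \<le> (\<Sum>j. cc j * indicator (Sl j) x)" for x
  proof (rule le_suminf_indicator_cover)
    fix x assume "indicator Q x * ennreal (C * cube_boundary_dist a r x powr (-s)) \<noteq> 0"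
    then have xQ: "x \<in> Q" by (cases "x \<in> Q") auto
    define d where "d = cube_boundary_dist a r x"
    have d: "0 < d" "d \<le> r / 2"
      using cube_boundary_dist_pos xQ cube_boundary_dist_le_half by (auto simp: Q_def d_def)
    then obtain j where j: "2^j \<le> r / d" "r / d < 2^Suc j"
      using ex_dyadic_bracket[of "r / d"] by (auto simp: field_simps)
    have j': "d \<le> r / 2^j" "r / 2^Suc j < d" using j d
      by (auto simp: field_simps simp del: power_Suc)
    have "x \<in> Sl j"
    proof -
      obtain i where i: "d = x$i - a$i \<or> d = a$i + r - x$i"
        using cube_boundary_dist_attained[of a r x] by (auto simp: d_def)
      have xb: "\<forall>k. a$k < x$k \<and> x$k < a$k + r" using xQ by (auto simp: Q_def mem_box_cart)
      from i have "x \<in> lower_slab a r i (r / 2^j) \<or> x \<in> upper_slab a r i (r / 2^j)"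
        using xb j'(1) by (auto simp: lower_slab_def upper_slab_def mem_box_cart less_imp_le)
      then show ?thesis by (auto simp: Sl_def)
    qed
    moreover have "d powr (-s) \<le> (r / 2^Suc j) powr (-s)"
      using j' r s by (intro powr_mono2') auto
    then have "C * d powr (-s) \<le> C * (r / 2^Suc j) powr (-s)"
      using C by (intro mult_left_mono) auto
    ultimately show "\<exists>j. x \<in> Sl j \<and> indicator Q x * ennreal (C * cube_boundary_dist a r x powr (-s)) \<le> cc j"
      using xQ by (intro exI[of _ j]) (auto simp: cc_def d_def intro: ennreal_leI)
  qed
  have "(\<integral>\<^sup>+x. indicator Q x * ennreal (C * cube_boundary_dist a r x powr (-s)) \<partial>lborel)
      \<le> (\<integral>\<^sup>+x. (\<Sum>j. cc j * indicator (Sl j) x) \<partial>lborel)"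
    by (intro nn_integral_mono pt)
  also have "\<dots> = (\<Sum>j. cc j * emeasure lborel (Sl j))"
    by (rule nn_integral_suminf_indicator[OF Slm])
  also have "\<dots> \<le> (\<Sum>j. ennreal (C * 2 * real N * 2 powr s * r powr (real N - s) * (2 powr (s - 1))^j))"
  proof (intro suminf_le allI)
    fix j :: nat
    have t: "0 \<le> r / 2^j" "r / 2^j \<le> r" using r by (auto simp: field_simps)
    have "emeasure lborel (Sl j) \<le> (\<Sum>i\<in>UNIV. emeasure lborel (lower_slab a r i (r / 2^j) \<union> upper_slab a r i (r / 2^j)))"
      unfolding Sl_def by (rule emeasure_subadditive_finite) (auto simp: lower_slab_def upper_slab_def)
    also have "\<dots> \<le> (\<Sum>i\<in>(UNIV::'n set). ennreal (2 * ((r / 2^j) * r^(N - 1))))"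
    proof (rule sum_mono)
      fix i :: 'n
      have "emeasure lborel (lower_slab a r i (r / 2^j) \<union> upper_slab a r i (r / 2^j)) \<le>
          emeasure lborel (lower_slab a r i (r / 2^j)) + emeasure lborel (upper_slab a r i (r / 2^j))"
        by (rule emeasure_subadditive) (auto simp: lower_slab_def upper_slab_def)
      also have "\<dots> = ennreal (2 * ((r / 2^j) * r^(N - 1)))"
        using emeasure_slab[OF t, of a i] t r by (simp add: N_def ennreal_plus[symmetric] del: ennreal_plus)
      finally show "emeasure lborel (lower_slab a r i (r / 2^j) \<union> upper_slab a r i (r / 2^j))
          \<le> ennreal (2 * ((r / 2^j) * r^(N - 1)))" .
    qed
    also have "\<dots> = ennreal (2 * real N * ((r / 2^j) * r^(N - 1)))"
      using r by (simp add: N_def ennreal_of_nat_eq_real_of_nat ennreal_mult'[symmetric] mult_ac)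
    finally have "cc j * emeasure lborel (Sl j) \<le> cc j * ennreal (2 * real N * ((r / 2^j) * r^(N - 1)))"
      by (rule mult_left_mono) simp
    also have "\<dots> = ennreal (C * (r / 2^Suc j) powr (-s) * (2 * real N * ((r / 2^j) * r^(N - 1))))"
      unfolding cc_def using C r by (simp add: ennreal_mult'[symmetric])
    also have "\<dots> = ennreal (C * 2 * real N * 2 powr s * r powr (real N - s) * (2 powr (s - 1))^j)"
      using slab_layer_term_eq[OF r N1] by simp
    finally show "cc j * emeasure lborel (Sl j) \<le> ennreal (C * 2 * real N * 2 powr s * r powr (real N - s) * (2 powr (s - 1))^j)" .
  qed auto
  also have "\<dots> = ennreal (C * 2 * real N * 2 powr s * r powr (real N - s) / (1 - 2 powr (s - 1)))"
    using C s by (intro suminf_geometric_ennreal) (auto simp: powr_less_one)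
  finally show ?thesis by (simp add: Q_def N_def)
qed

lemma frac_perimeter_open_cube_le:
  assumes s: "0 < s" "s < 1"
  obtains C where "0 \<le> C"
    and "\<And>(a :: real^'n) r. 0 < r \<Longrightarrow> frac_perimeter s (open_cube a r) \<le> ennreal (C * r powr (real CARD('n) - s))"
proof
  define N where "N = CARD('n)"
  define C1 where "C1 = unit_ball_vol (real N) * 2^N / (1 - 2 powr (-s))"
  have "2 powr (-s) < 1" using s by (simp add: powr_less_one)
  then have C1: "0 \<le> C1" unfolding C1_def by simp
  have "2 powr (s - 1) < 1" using s by (simp add: powr_less_one)
  then show "0 \<le> C1 * 2 * real N * 2 powr s / (1 - 2 powr (s - 1))"
    using C1 by simp
  fix a :: "real^'n" and r :: real
  assume r: "0 < r"
  define Q where "Q = open_cube a r"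
  have inner: "(\<integral>\<^sup>+y. indicator Q x * indicator (- Q) y * ennreal (norm (x - y) powr - (real N + s)) \<partial>lborel)
      \<le> indicator Q x * ennreal (C1 * cube_boundary_dist a r x powr (-s))" for x
  proof (cases "x \<in> Q")
    case True
    have d: "0 < cube_boundary_dist a r x" using True cube_boundary_dist_pos by (auto simp: Q_def)
    have "(\<integral>\<^sup>+y. indicator Q x * indicator (- Q) y * ennreal (norm (x - y) powr - (real N + s)) \<partial>lborel)
       \<le> (\<integral>\<^sup>+y. indicator {y. cube_boundary_dist a r x \<le> norm (x - y)} y * ennreal (norm (x - y) powr - (real N + s)) \<partial>lborel)"
      using True cube_boundary_dist_le_dist[of x a r]
      by (intro nn_integral_mono) (auto simp: Q_def split: split_indicator)
    also have "\<dots> \<le> ennreal (C1 * cube_boundary_dist a r x powr (-s))"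
      using nn_integral_kernel_outside_ball_le[OF d s(1), of x] by (simp add: C1_def N_def)
    finally show ?thesis using True by simp
  qed simp
  have "frac_perimeter s Q \<le> (\<integral>\<^sup>+x. indicator Q x * ennreal (C1 * cube_boundary_dist a r x powr (-s)) \<partial>lborel)"
    unfolding frac_perimeter_lborel N_def[symmetric] by (intro nn_integral_mono inner)
  also have "\<dots> \<le> ennreal (C1 * 2 * real N * 2 powr s / (1 - 2 powr (s - 1)) * r powr (real N - s))"
    unfolding Q_def N_def by (rule nn_integral_cube_boundary_dist_powr_le[OF r s C1[unfolded N_def]])
  finally show "frac_perimeter s (open_cube a r)
      \<le> ennreal (C1 * 2 * real N * 2 powr s / (1 - 2 powr (s - 1)) * r powr (real CARD('n) - s))"
    by (simp add: Q_def N_def)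
qed

section \<open>A chain of shrinking cubes\<close>

definition chain_side :: "real \<Rightarrow> nat \<Rightarrow> nat \<Rightarrow> real" where
  "chain_side \<sigma> N k = real (Suc k) powr (-1 / (real N - \<sigma>))"

text \<open>The cubes sit along the coordinate axis \<open>undefined :: 'n\<close>, the \<open>k\<close>-th one at distance
  \<open>3 k\<close> from the origin; the neighbour of a cube is its translate by its own side length.\<close>

definition chain_cube :: "real \<Rightarrow> nat \<Rightarrow> (real^'n) set" where
  "chain_cube \<sigma> k = open_cube ((3 * real k) *\<^sub>R axis undefined 1) (chain_side \<sigma> CARD('n) k)"

definition chain_neighbour :: "real \<Rightarrow> nat \<Rightarrow> (real^'n) set" where
  "chain_neighbour \<sigma> k =
     open_cube ((3 * real k + chain_side \<sigma> CARD('n) k) *\<^sub>R axis undefined 1) (chain_side \<sigma> CARD('n) k)"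

definition cube_chain :: "real \<Rightarrow> (real^'n) set" where
  "cube_chain \<sigma> = (\<Union>k. chain_cube \<sigma> k)"

lemma chain_side_pos: "0 < chain_side \<sigma> N k"
  by (simp add: chain_side_def)

lemma chain_side_le_1:
  assumes "\<sigma> < 1" "1 \<le> N"
  shows "chain_side \<sigma> N k \<le> 1"
proof -
  have "-1 / (real N - \<sigma>) \<le> 0" using assms by simp
  then have "real (Suc k) powr (-1 / (real N - \<sigma>)) \<le> real (Suc k) powr 0"
    by (intro powr_mono) auto
  then show ?thesis unfolding chain_side_def by simp
qed

lemma summable_chain_side_powr_iff:
  assumes "\<sigma> < real N"
  shows "summable (\<lambda>k. chain_side \<sigma> N k powr (real N - s)) \<longleftrightarrow> s < \<sigma>"
proof -
  have "chain_side \<sigma> N k powr (real N - s) = real (Suc k) powr ((s - real N) / (real N - \<sigma>))" for k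
    unfolding chain_side_def powr_powr
    by (rule arg_cong[where f="\<lambda>e. _ powr e"]) (simp add: divide_simps)
  then have "summable (\<lambda>k. chain_side \<sigma> N k powr (real N - s))
      \<longleftrightarrow> summable (\<lambda>k. real (Suc k) powr ((s - real N) / (real N - \<sigma>)))"
    by simp
  also have "\<dots> \<longleftrightarrow> summable (\<lambda>k. real k powr ((s - real N) / (real N - \<sigma>)))"
    by (rule summable_Suc_iff)
  also have "\<dots> \<longleftrightarrow> (s - real N) / (real N - \<sigma>) < -1" by (rule summable_real_powr_iff)
  also have "\<dots> \<longleftrightarrow> s < \<sigma>" using assms by (simp add: field_simps)
  finally show ?thesis .
qed

lemma chain_cube_component:
  fixes x :: "real^'n"
  assumes "x \<in> chain_cube \<sigma> k"
  shows "3 * real k < x$undefined" "x$undefined < 3 * real k + chain_side \<sigma> CARD('n) k"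
proof -
  have "\<forall>i. ((3 * real k) *\<^sub>R axis undefined 1) $ i < x$i
      \<and> x$i < ((3 * real k) *\<^sub>R axis undefined 1 + vec (chain_side \<sigma> CARD('n) k)) $ i"
    using assms unfolding chain_cube_def mem_box_cart .
  from spec[OF this, of undefined]
  show "3 * real k < x$undefined" "x$undefined < 3 * real k + chain_side \<sigma> CARD('n) k"
    by (simp_all add: axis_def)
qed

lemma chain_neighbour_component:
  fixes x :: "real^'n"
  assumes "x \<in> chain_neighbour \<sigma> k"
  shows "3 * real k + chain_side \<sigma> CARD('n) k < x$undefined"
    "x$undefined < 3 * real k + 2 * chain_side \<sigma> CARD('n) k"
proof -
  define c where "c = 3 * real k + chain_side \<sigma> CARD('n) k"
  have "\<forall>i. (c *\<^sub>R axis undefined 1) $ i < x$i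
      \<and> x$i < (c *\<^sub>R axis undefined 1 + vec (chain_side \<sigma> CARD('n) k)) $ i"
    using assms unfolding chain_neighbour_def mem_box_cart c_def .
  from spec[OF this, of undefined]
  show "3 * real k + chain_side \<sigma> CARD('n) k < x$undefined"
    "x$undefined < 3 * real k + 2 * chain_side \<sigma> CARD('n) k"
    by (simp_all add: axis_def c_def)
qed

lemma disjoint_family_chain_cube:
  assumes "\<sigma> < 1"
  shows "disjoint_family (chain_cube \<sigma> :: nat \<Rightarrow> (real^'n) set)"
  unfolding disjoint_family_on_def
proof (intro ballI impI)
  fix j k :: nat assume "j \<noteq> k"
  have N: "1 \<le> CARD('n)" by (simp add: Suc_leI)
  show "chain_cube \<sigma> j \<inter> chain_cube \<sigma> k = ({} :: (real^'n) set)"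
  proof (rule equals0I)
    fix x :: "real^'n" assume "x \<in> chain_cube \<sigma> j \<inter> chain_cube \<sigma> k"
    then have "x \<in> chain_cube \<sigma> j" "x \<in> chain_cube \<sigma> k" by simp_all
    note bounds = chain_cube_component[OF this(1)] chain_cube_component[OF this(2)]
      chain_side_le_1[OF assms N, of j] chain_side_le_1[OF assms N, of k]
    have "real j < real k + 1" "real k < real j + 1" using bounds by linarith+
    with \<open>j \<noteq> k\<close> show False by linarith
  qed
qed

lemma chain_neighbour_disjoint:
  assumes "\<sigma> < 1"
  shows "chain_neighbour \<sigma> k \<inter> (cube_chain \<sigma> :: (real^'n) set) = {}"
proof (rule equals0I)
  have N: "1 \<le> CARD('n)" by (simp add: Suc_leI)
  fix x :: "real^'n" assume "x \<in> chain_neighbour \<sigma> k \<inter> cube_chain \<sigma>"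
  then obtain j where x: "x \<in> chain_neighbour \<sigma> k" "x \<in> chain_cube \<sigma> j"
    unfolding cube_chain_def by blast
  note bounds = chain_neighbour_component[OF x(1)] chain_cube_component[OF x(2)]
    chain_side_le_1[OF assms N, of j] chain_side_le_1[OF assms N, of k]
  consider "j < k" | "j = k" | "k < j" by linarith
  then show False
  proof cases
    case 1
    then have "real j + 1 \<le> real k" by simp
    then show False using bounds by linarith
  next
    case 3
    then have "real k + 1 \<le> real j" by simp
    then show False using bounds by linarith
  next
    case 2
    then have "real j = real k" "chain_side \<sigma> CARD('n) j = chain_side \<sigma> CARD('n) k" by simp_all
    with bounds show False by linarith
  qed
qed

lemma emeasure_chain_cube:
  "emeasure lborel (chain_cube \<sigma> k :: (real^'n) set) = ennreal (chain_side \<sigma> CARD('n) k ^ CARD('n))"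
  "emeasure lborel (chain_neighbour \<sigma> k :: (real^'n) set) = ennreal (chain_side \<sigma> CARD('n) k ^ CARD('n))"
  unfolding chain_cube_def chain_neighbour_def using chain_side_pos[of \<sigma> "CARD('n)" k]
  by (subst emeasure_lborel_box_cart; simp)+

lemma chain_neighbour_dist_le:
  assumes "x \<in> chain_cube \<sigma> k" "y \<in> (chain_neighbour \<sigma> k :: (real^'n) set)"
  shows "norm (x - y) \<le> 2 * real CARD('n) * chain_side \<sigma> CARD('n) k"
proof -
  define r where "r = chain_side \<sigma> CARD('n) k"
  have "\<bar>(x - y)$i\<bar> \<le> 2 * r" for i
  proof -
    have "(3 * real k) * axis undefined 1 $ i < x$i" "x$i < (3 * real k) * axis undefined 1 $ i + r"
      "(3 * real k + r) * axis undefined 1 $ i < y$i" "y$i < (3 * real k + r) * axis undefined 1 $ i + r"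
      using assms unfolding chain_cube_def chain_neighbour_def mem_box_cart r_def by auto
    then show ?thesis using chain_side_pos[of \<sigma> "CARD('n)" k]
      by (cases "i = undefined") (auto simp: r_def axis_def abs_le_iff)
  qed
  then have "(\<Sum>i\<in>UNIV. \<bar>(x - y)$i\<bar>) \<le> (\<Sum>i\<in>(UNIV::'n set). 2 * r)"
    by (intro sum_mono)
  then show ?thesis using norm_le_l1_cart[of "x - y"] by (simp add: r_def)
qed

lemma frac_perimeter_cube_chain_finite:
  assumes s: "0 < s" "s < \<sigma>" "\<sigma> < 1"
  shows "frac_perimeter s (cube_chain \<sigma> :: (real^'n) set) < \<infinity>"
proof -
  define N where "N = CARD('n)"
  obtain C where C: "0 \<le> C"
    and cube: "\<And>(a :: real^'n) r. 0 < r \<Longrightarrow> frac_perimeter s (open_cube a r) \<le> ennreal (C * r powr (real N - s))"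
    using frac_perimeter_open_cube_le[of s] s unfolding N_def by auto
  have "frac_perimeter s (cube_chain \<sigma> :: (real^'n) set) \<le> (\<Sum>k. frac_perimeter s (chain_cube \<sigma> k :: (real^'n) set))"
    unfolding cube_chain_def by (rule frac_perimeter_UN_le) (simp add: chain_cube_def)
  also have "\<dots> \<le> (\<Sum>k. ennreal (C * chain_side \<sigma> N k powr (real N - s)))"
    unfolding chain_cube_def N_def by (intro suminf_le cube[unfolded N_def] chain_side_pos) auto
  also have "\<dots> < \<infinity>"
  proof -
    have "1 \<le> real N" by (simp add: N_def Suc_leI)
    then have "\<sigma> < real N" using s by linarith
    then have "summable (\<lambda>k. C * chain_side \<sigma> N k powr (real N - s))"
      using summable_chain_side_powr_iff[of \<sigma> N s] s by (intro summable_mult) simp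
    then show ?thesis using C by (simp add: ennreal_suminf_neq_top less_top)
  qed
  finally show ?thesis .
qed

lemma frac_perimeter_cube_chain_infinite:
  assumes s: "\<sigma> \<le> s" "s < 1" "0 < \<sigma>"
  shows "frac_perimeter s (cube_chain \<sigma> :: (real^'n) set) = \<infinity>"
proof -
  define N where "N = CARD('n)"
  have N0: "0 < N" by (simp add: N_def)
  define c where "c = (2 * real N) powr - (real N + s)"
  have summand: "ennreal ((2 * real N * chain_side \<sigma> N k) powr - (real N + s))
      * emeasure lborel (chain_cube \<sigma> k :: (real^'n) set) * emeasure lborel (chain_neighbour \<sigma> k :: (real^'n) set)
      = ennreal (c * chain_side \<sigma> N k powr (real N - s))" for k
  proof -
    have "(2 * real N * chain_side \<sigma> N k) powr - (real N + s) * chain_side \<sigma> N k ^ N * chain_side \<sigma> N k ^ N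
        = c * chain_side \<sigma> N k powr (real N - s)"
      using chain_side_pos[of \<sigma> N k] N0
      by (simp add: c_def powr_mult powr_realpow[symmetric] powr_add[symmetric] mult.assoc)
    moreover have "0 \<le> (2 * real N * chain_side \<sigma> N k) powr - (real N + s)" "0 \<le> chain_side \<sigma> N k ^ N"
      using chain_side_pos[of \<sigma> N k] by simp_all
    ultimately show ?thesis
      unfolding emeasure_chain_cube N_def[symmetric] by (simp add: ennreal_mult[symmetric] mult.assoc)
  qed
  have "(\<Sum>k. ennreal (c * chain_side \<sigma> N k powr (real N - s))) \<le> frac_perimeter s (cube_chain \<sigma> :: (real^'n) set)"
    unfolding summand[symmetric] unfolding N_def
  proof (rule frac_perimeter_ge_suminf)
    show "disjoint_family (chain_cube \<sigma> :: nat \<Rightarrow> (real^'n) set)"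
      using s by (intro disjoint_family_chain_cube) simp
    show "chain_neighbour \<sigma> k \<inter> (cube_chain \<sigma> :: (real^'n) set) = {}" for k
      using s by (intro chain_neighbour_disjoint) simp
    show "chain_cube \<sigma> k \<subseteq> (cube_chain \<sigma> :: (real^'n) set)" for k
      unfolding cube_chain_def by blast
    show "chain_cube \<sigma> k \<in> sets borel" "chain_neighbour \<sigma> k \<in> sets borel" for k
      unfolding chain_cube_def chain_neighbour_def by simp_all
  qed (use s chain_neighbour_dist_le in auto)
  moreover have "(\<Sum>k. ennreal (c * chain_side \<sigma> N k powr (real N - s))) = \<infinity>"
  proof (rule summable_iff_suminf_neq_top[simplified infinity_ennreal_def[symmetric]])
    show "0 \<le> c * chain_side \<sigma> N k powr (real N - s)" for k by (simp add: c_def)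
    have "\<sigma> < real N" using s N0 by linarith
    then have "\<not> summable (\<lambda>k. chain_side \<sigma> N k powr (real N - s))"
      using summable_chain_side_powr_iff[of \<sigma> N s] s by simp
    moreover have "c \<noteq> 0" using N0 by (simp add: c_def)
    ultimately show "\<not> summable (\<lambda>k. c * chain_side \<sigma> N k powr (real N - s))"
      by (simp add: summable_cmult_iff)
  qed
  ultimately show ?thesis by (simp add: top_unique)
qed

section \<open>Difference quotients and translations\<close>

lemma lborel_integral_translate:
  fixes f :: "'a::euclidean_space \<Rightarrow> real"
  assumes [measurable]: "f \<in> borel_measurable borel"
  shows "(\<integral>x. f (c + x) \<partial>lborel) = (\<integral>x. f x \<partial>lborel)"
proof -
  have "(\<integral>x. f x \<partial>lborel) = (\<integral>x. f x \<partial>(distr lborel borel ((+) c)))"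
    by (simp add: lborel_distr_plus)
  also have "\<dots> = (\<integral>x. f (c + x) \<partial>lborel)"
    by (rule integral_distr) auto
  finally show ?thesis by simp
qed

lemma emeasure_lborel_translate:
  fixes F :: "'a::euclidean_space set"
  assumes [measurable]: "F \<in> sets borel"
  shows "emeasure lborel {y. y - c \<in> F} = emeasure lborel F"
proof -
  have "emeasure lborel {y. y - c \<in> F} = emeasure (distr lborel borel ((+) c)) {y. y - c \<in> F}"
    by (simp add: lborel_distr_plus)
  also have "\<dots> = emeasure lborel (((+) c) -` {y. y - c \<in> F} \<inter> space lborel)"
    by (rule emeasure_distr) auto
  also have "((+) c) -` {y. y - c \<in> F} \<inter> space lborel = F" by auto
  finally show ?thesis .
qed

lemma difference_quotient_bounded:
  fixes g G :: "'a::real_normed_vector \<Rightarrow> real"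
  assumes der: "\<And>x. ((\<lambda>t. g (x + t *\<^sub>R v)) has_real_derivative G x) (at 0)"
    and G: "\<And>x. \<bar>G x\<bar> \<le> M" and h: "0 < h"
  shows "\<bar>(g (x + h *\<^sub>R v) - g x) / h\<bar> \<le> M"
proof -
  have "((\<lambda>u. g (x + u *\<^sub>R v)) has_real_derivative G (x + t *\<^sub>R v)) (at t)" for t
  proof -
    have "((\<lambda>u. g (x + u *\<^sub>R v)) \<circ> (\<lambda>u. u + t) has_real_derivative G (x + t *\<^sub>R v)) (at 0)"
      using der[of "x + t *\<^sub>R v"] by (simp add: comp_def scaleR_add_left add_ac)
    then show ?thesis using DERIV_shift[of "\<lambda>u. g (x + u *\<^sub>R v)" _ 0 t] by (simp add: comp_def)
  qed
  then obtain z where "g (x + h *\<^sub>R v) - g (x + 0 *\<^sub>R v) = (h - 0) * G (x + z *\<^sub>R v)"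
    using MVT2[OF h, of "\<lambda>u. g (x + u *\<^sub>R v)" "\<lambda>t. G (x + t *\<^sub>R v)"] by blast
  then have "(g (x + h *\<^sub>R v) - g x) / h = G (x + z *\<^sub>R v)" using h by simp
  then show ?thesis using G by simp
qed

lemma difference_quotient_tendsto:
  fixes g :: "'a::real_normed_vector \<Rightarrow> real"
  assumes "((\<lambda>t. g (x + t *\<^sub>R v)) has_real_derivative D) (at 0)"
  shows "(\<lambda>m. (g (x + inverse (real (Suc m)) *\<^sub>R v) - g x) / inverse (real (Suc m))) \<longlonglongrightarrow> D"
proof -
  have "((\<lambda>t. (g (x + t *\<^sub>R v) - g x) / t) \<longlongrightarrow> D) (at 0)"
    using assms unfolding has_field_derivative_iff by simp
  moreover have "filterlim (\<lambda>m. inverse (real (Suc m))) (at 0) sequentially"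
    by (rule filterlim_atI[OF LIMSEQ_inverse_real_of_nat]) simp
  ultimately show ?thesis by (rule filterlim_compose)
qed

text \<open>Translation-invariance of \<open>lborel\<close> moves the difference quotient of \<open>g\<close> onto the
  indicator of \<open>F\<close>, and \<open>\<bar>g\<bar> \<le> 1\<close> leaves the measure of the symmetric difference.\<close>

lemma integral_difference_quotient_le:
  fixes g :: "'a::euclidean_space \<Rightarrow> real" and F :: "'a set"
  assumes F[measurable]: "F \<in> sets borel" and F_fin: "emeasure lborel F < \<infinity>"
    and g_cont: "continuous_on UNIV g" and g_le: "\<And>x. \<bar>g x\<bar> \<le> 1"
    and h: "0 < h" and L: "0 \<le> L"
    and defect: "emeasure lborel ({y. y - h *\<^sub>R v \<in> F} - F) + emeasure lborel (F - {y. y - h *\<^sub>R v \<in> F})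
      \<le> ennreal (L * h)"
  shows "(\<integral>x. indicator F x * ((g (x + h *\<^sub>R v) - g x) / h) \<partial>lborel) \<le> L"
proof -
  have [measurable]: "g \<in> borel_measurable borel" by (rule borel_measurable_continuous_onI[OF g_cont])
  define T where "T = {y. y - h *\<^sub>R v \<in> F}"
  have [measurable]: "T \<in> sets borel" unfolding T_def by measurable
  have T_fin: "emeasure lborel T < \<infinity>"
    unfolding T_def using emeasure_lborel_translate[OF F, of "h *\<^sub>R v"] F_fin by simp
  have "emeasure lborel (T - F) < \<infinity>"
    using T_fin by (rule le_less_trans[rotated]) (rule emeasure_mono, auto)
  moreover have "emeasure lborel (F - T) < \<infinity>"
    using F_fin by (rule le_less_trans[rotated]) (rule emeasure_mono, auto)
  ultimately have fin: "emeasure lborel (T - F) < \<infinity>" "emeasure lborel (F - T) < \<infinity>" .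
  have integrable_on_finite: "integrable lborel (\<lambda>x. indicator A x * g (x + c))"
    if [measurable]: "A \<in> sets borel" and "emeasure lborel A < \<infinity>" for A c
  proof (rule Bochner_Integration.integrable_bound[where f="indicator A"])
    show "integrable lborel (indicator A :: 'a \<Rightarrow> real)" using that by simp
    show "AE x in lborel. norm (indicator A x * g (x + c)) \<le> norm (indicator A x :: real)"
      using g_le by (intro AE_I2) (auto split: split_indicator)
  qed measurable
  have int_shifted: "integrable lborel (\<lambda>x. indicator F x * g (x + h *\<^sub>R v))"
    and int_F: "integrable lborel (\<lambda>x. indicator F x * g x)"
    and int_T: "integrable lborel (\<lambda>x. indicator T x * g x)"
    using integrable_on_finite[OF F F_fin, of "h *\<^sub>R v"] integrable_on_finite[OF F F_fin, of 0]
      integrable_on_finite[of T 0] T_fin by simp_all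
  have shift: "(\<integral>x. indicator F x * g (x + h *\<^sub>R v) \<partial>lborel) = (\<integral>x. indicator T x * g x \<partial>lborel)"
  proof -
    have "(\<integral>x. indicator T x * g x \<partial>lborel) = (\<integral>x. indicator T (h *\<^sub>R v + x) * g (h *\<^sub>R v + x) \<partial>lborel)"
      by (rule lborel_integral_translate[symmetric]) measurable
    also have "\<dots> = (\<integral>x. indicator F x * g (x + h *\<^sub>R v) \<partial>lborel)"
      by (simp add: T_def add.commute indicator_def)
    finally show ?thesis by simp
  qed
  have "(\<integral>x. indicator F x * ((g (x + h *\<^sub>R v) - g x) / h) \<partial>lborel)
      = (\<integral>x. indicator F x * g (x + h *\<^sub>R v) - indicator F x * g x \<partial>lborel) / h"
    by (simp add: right_diff_distrib)
  also have "\<dots> = ((\<integral>x. indicator T x * g x \<partial>lborel) - (\<integral>x. indicator F x * g x \<partial>lborel)) / h"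
    by (subst Bochner_Integration.integral_diff[OF int_shifted int_F]) (simp add: shift)
  also have "\<dots> = (\<integral>x. (indicator T x - indicator F x) * g x \<partial>lborel) / h"
    by (subst Bochner_Integration.integral_diff[OF int_T int_F, symmetric]) (simp add: left_diff_distrib)
  also have "\<dots> \<le> (\<integral>x. indicator (T - F) x + indicator (F - T) x \<partial>lborel) / h"
  proof (rule divide_right_mono[OF integral_mono], goal_cases)
    case 1 show ?case
      using Bochner_Integration.integrable_diff[OF int_T int_F] by (simp add: left_diff_distrib)
  next
    case 2 show ?case using fin by (intro Bochner_Integration.integrable_add) auto
  next
    case (3 x) show ?case using g_le[of x] by (auto simp: indicator_def abs_le_iff)
  qed (use h in simp)
  also have "\<dots> \<le> L"
  proof -
    have "(\<integral>x. indicator (T - F) x + indicator (F - T) x \<partial>lborel) = measure lborel (T - F) + measure lborel (F - T)"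
      using fin by (subst Bochner_Integration.integral_add) auto
    moreover have "ennreal (measure lborel (T - F) + measure lborel (F - T)) \<le> ennreal (L * h)"
      using defect fin by (simp add: T_def emeasure_eq_ennreal_measure ennreal_plus[symmetric] del: ennreal_plus)
    ultimately have "(\<integral>x. indicator (T - F) x + indicator (F - T) x \<partial>lborel) \<le> L * h"
      using L h by (simp add: ennreal_le_iff del: ennreal_plus)
    then show ?thesis using h by (simp add: divide_le_eq)
  qed
  finally show ?thesis .
qed

lemma integral_directional_derivative_le:
  fixes g G :: "'a::euclidean_space \<Rightarrow> real" and F :: "'a set"
  assumes F[measurable]: "F \<in> sets borel" and F_fin: "emeasure lborel F < \<infinity>"
    and g_cont: "continuous_on UNIV g" and g_le: "\<And>x. \<bar>g x\<bar> \<le> 1"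
    and G_cont: "continuous_on UNIV G" and G_le: "\<And>x. \<bar>G x\<bar> \<le> M"
    and der: "\<And>x. ((\<lambda>t. g (x + t *\<^sub>R v)) has_real_derivative G x) (at 0)"
    and L: "0 \<le> L"
    and defect: "\<And>h. 0 < h \<Longrightarrow> emeasure lborel ({y. y - h *\<^sub>R v \<in> F} - F)
      + emeasure lborel (F - {y. y - h *\<^sub>R v \<in> F}) \<le> ennreal (L * h)"
  shows "(\<integral>x. indicator F x * G x \<partial>lborel) \<le> L"
proof -
  have [measurable]: "g \<in> borel_measurable borel" by (rule borel_measurable_continuous_onI[OF g_cont])
  have [measurable]: "G \<in> borel_measurable borel" by (rule borel_measurable_continuous_onI[OF G_cont])
  define q where "q m x = indicator F x * ((g (x + inverse (real (Suc m)) *\<^sub>R v) - g x) / inverse (real (Suc m)))"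
    for m x
  have [measurable]: "q m \<in> borel_measurable borel" for m unfolding q_def by measurable
  have lim: "(\<lambda>m. integral\<^sup>L lborel (q m)) \<longlonglongrightarrow> (\<integral>x. indicator F x * G x \<partial>lborel)"
  proof (rule integral_dominated_convergence[where w="\<lambda>x. indicator F x * M"])
    show "integrable lborel (\<lambda>x. indicator F x * M)" using F_fin by simp
    show "AE x in lborel. (\<lambda>m. q m x) \<longlonglongrightarrow> indicator F x * G x"
      unfolding q_def by (intro AE_I2 tendsto_mult tendsto_const difference_quotient_tendsto der)
    show "AE x in lborel. norm (q m x) \<le> indicator F x * M" for m
      using difference_quotient_bounded[OF der G_le, of "inverse (real (Suc m))"]
      by (intro AE_I2) (simp add: q_def indicator_def)
  qed (simp_all add: q_def)
  have bound: "integral\<^sup>L lborel (q m) \<le> L" for m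
    unfolding q_def by (rule integral_difference_quotient_le[OF F F_fin g_cont g_le _ L defect]) simp_all
  show ?thesis by (rule LIMSEQ_le_const2[OF lim]) (use bound in auto)
qed

lemma C1_compact_support_facts:
  fixes \<phi> :: "real^'n \<Rightarrow> real^'n"
  assumes D: "\<And>x. (\<phi> has_derivative D x) (at x)"
    and D_cont: "\<And>v. continuous_on UNIV (\<lambda>x. D x v)"
    and supp: "compact (closure {x. \<phi> x \<noteq> 0})"
  shows derivative_eq_0_outside_support: "x \<notin> closure {x. \<phi> x \<noteq> 0} \<Longrightarrow> D x w = 0"
    and divergence_eq_sum_partials: "divergence \<phi> x = (\<Sum>i\<in>UNIV. D x (axis i 1) $ i)"
    and has_real_derivative_partial:
      "((\<lambda>t. \<phi> (x + t *\<^sub>R axis i 1) $ i) has_real_derivative (D x (axis i 1) $ i)) (at 0)"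
    and bounded_partial: "\<exists>M. \<forall>x. \<bar>D x w $ i\<bar> \<le> M"
    and continuous_on_field: "continuous_on UNIV \<phi>"
proof -
  define S where "S = closure {x. \<phi> x \<noteq> 0}"
  have zero: "D y = (\<lambda>_. 0)" if y: "y \<notin> S" for y
  proof -
    have "(\<phi> has_derivative (\<lambda>_. 0)) (at y)"
    proof (rule has_derivative_transform_within_open[OF has_derivative_const])
      show "open (- S)" unfolding S_def by (rule open_Compl) simp
      show "y \<in> - S" using y by simp
      fix z assume "z \<in> - S"
      then have "z \<notin> {x. \<phi> x \<noteq> 0}" using closure_subset[of "{x. \<phi> x \<noteq> 0}"] by (auto simp: S_def)
      then show "0 = \<phi> z" by simp
    qed
    then show ?thesis using has_derivative_unique[OF D[of y]] by blast
  qed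
  then show "x \<notin> closure {x. \<phi> x \<noteq> 0} \<Longrightarrow> D x w = 0" by (simp add: S_def)
  show "divergence \<phi> x = (\<Sum>i\<in>UNIV. D x (axis i 1) $ i)"
    unfolding divergence_def using frechet_derivative_at[OF D[of x]] by simp
  have "((\<lambda>t. x + t *\<^sub>R axis i 1) has_derivative (\<lambda>t. t *\<^sub>R axis i 1)) (at 0)"
    by (auto intro!: derivative_eq_intros)
  from has_derivative_compose[OF this, of \<phi> "D x"] D[of x]
  have "((\<lambda>t. \<phi> (x + t *\<^sub>R axis i 1)) has_derivative (\<lambda>t. D x (t *\<^sub>R axis i 1))) (at 0)" by simp
  from bounded_linear.has_derivative[OF bounded_linear_vec_nth[of i] this]
  have "((\<lambda>t. \<phi> (x + t *\<^sub>R axis i 1) $ i) has_derivative (\<lambda>t. D x (t *\<^sub>R axis i 1) $ i)) (at 0)" .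
  moreover have "(\<lambda>t. D x (t *\<^sub>R axis i 1) $ i) = (*) (D x (axis i 1) $ i)"
    using has_derivative_linear[OF D[of x]] by (auto simp: linear_scale mult.commute)
  ultimately show "((\<lambda>t. \<phi> (x + t *\<^sub>R axis i 1) $ i) has_real_derivative (D x (axis i 1) $ i)) (at 0)"
    by (simp add: has_field_derivative_def)
  have cont: "continuous_on UNIV (\<lambda>x. D x w $ i)" by (intro continuous_on_component D_cont)
  have "compact ((\<lambda>x. D x w $ i) ` S)"
    using supp by (intro compact_continuous_image continuous_on_subset[OF cont]) (auto simp: S_def)
  then obtain a where a: "\<forall>y\<in>(\<lambda>x. D x w $ i) ` S. norm y \<le> a"
    using compact_imp_bounded bounded_iff by metis
  have "\<bar>D y w $ i\<bar> \<le> max a 0" for y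
    using a zero[of y] by (cases "y \<in> S") auto
  then show "\<exists>M. \<forall>x. \<bar>D x w $ i\<bar> \<le> M" by blast
  show "continuous_on UNIV \<phi>"
    using D has_derivative_continuous continuous_at_imp_continuous_on by blast
qed

lemma C1c_field_divergence_eq_0:
  assumes "C1c_field (ball 0 R) \<phi>" and "R \<le> norm x"
  shows "divergence \<phi> x = 0"
proof -
  from assms(1) obtain D where D: "\<And>x. (\<phi> has_derivative D x) (at x)"
    and D_cont: "\<And>v. continuous_on UNIV (\<lambda>x. D x v)"
    and supp: "compact (closure {x. \<phi> x \<noteq> 0})" "closure {x. \<phi> x \<noteq> 0} \<subseteq> ball 0 R"
    unfolding C1c_field_def by blast
  have "x \<notin> closure {x. \<phi> x \<noteq> 0}" using assms(2) supp(2) by (auto simp: subset_eq)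
  then show ?thesis
    by (simp add: divergence_eq_sum_partials[OF D D_cont supp(1)] derivative_eq_0_outside_support[OF D D_cont supp(1)])
qed

text \<open>The hypothesis on \<open>F\<close> is the translation characterisation of finite perimeter; each
  partial derivative is then bounded by the directional estimate.\<close>

lemma integral_divergence_le:
  fixes \<phi> :: "real^'n \<Rightarrow> real^'n" and F :: "(real^'n) set"
  assumes \<phi>: "C1c_field U \<phi>" and \<phi>_le: "\<And>x. norm (\<phi> x) \<le> 1"
    and F[measurable]: "F \<in> sets borel" and F_fin: "emeasure lborel F < \<infinity>" and L: "0 \<le> L"
    and defect: "\<And>i h. 0 < h \<Longrightarrow> emeasure lborel ({y. y - h *\<^sub>R axis i 1 \<in> F} - F)
      + emeasure lborel (F - {y. y - h *\<^sub>R axis i 1 \<in> F}) \<le> ennreal (L * h)"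
  shows "integral F (divergence \<phi>) \<le> real CARD('n) * L"
proof -
  from \<phi> obtain D where D: "\<And>x. (\<phi> has_derivative D x) (at x)"
    and D_cont: "\<And>v. continuous_on UNIV (\<lambda>x. D x v)"
    and supp: "compact (closure {x. \<phi> x \<noteq> 0})"
    unfolding C1c_field_def by blast
  define G where "G i x = D x (axis i 1) $ i" for i x
  have partial_le: "G i integrable_on F \<and> integral F (G i) \<le> L" for i
  proof -
    obtain M where M: "\<And>x. \<bar>G i x\<bar> \<le> M"
      using bounded_partial[OF D D_cont supp, of "axis i 1" i] unfolding G_def by blast
    have G_cont: "continuous_on UNIV (G i)" unfolding G_def by (intro continuous_on_component D_cont)
    have [measurable]: "G i \<in> borel_measurable borel" by (rule borel_measurable_continuous_onI[OF G_cont])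
    have "integrable lborel (\<lambda>x. indicator F x * G i x)"
    proof (rule Bochner_Integration.integrable_bound[where f="\<lambda>x. indicator F x * M"])
      show "integrable lborel (\<lambda>x. indicator F x * M)" using F_fin by simp
      have "\<bar>G i x\<bar> \<le> \<bar>M\<bar>" for x using M[of x] by linarith
      then show "AE x in lborel. norm (indicator F x * G i x) \<le> norm (indicator F x * M)"
        by (intro AE_I2) (simp split: split_indicator)
    qed measurable
    moreover have mb: "(\<lambda>x. indicator F x *\<^sub>R G i x) \<in> lborel \<rightarrow>\<^sub>M borel" by measurable
    ultimately have int: "set_integrable lebesgue F (G i)"
      unfolding set_integrable_def using integrable_completion[OF mb] by simp
    have eq: "integral F (G i) = (\<integral>x. indicator F x * G i x \<partial>lborel)"
    proof -
      have "integral F (G i) = (LINT x:F|lebesgue. G i x)"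
        using set_lebesgue_integral_eq_integral(2)[OF int] by simp
      also have "\<dots> = (\<integral>x. indicator F x *\<^sub>R G i x \<partial>lborel)"
        unfolding set_lebesgue_integral_def by (rule integral_completion[OF mb])
      finally show ?thesis by simp
    qed
    have "(\<integral>x. indicator F x * G i x \<partial>lborel) \<le> L"
    proof (rule integral_directional_derivative_le[OF F F_fin _ _ G_cont M _ L defect])
      show "continuous_on UNIV (\<lambda>x. \<phi> x $ i)"
        by (intro continuous_on_component continuous_on_field[OF D D_cont supp])
      show "\<bar>\<phi> x $ i\<bar> \<le> 1" for x using component_le_norm_cart[of "\<phi> x" i] \<phi>_le[of x] by simp
      show "((\<lambda>t. \<phi> (x + t *\<^sub>R axis i 1) $ i) has_real_derivative G i x) (at 0)" for x
        unfolding G_def by (rule has_real_derivative_partial[OF D D_cont supp])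
    qed
    then show ?thesis using eq set_lebesgue_integral_eq_integral(1)[OF int] by simp
  qed
  have "integral F (divergence \<phi>) = integral F (\<lambda>x. \<Sum>i\<in>UNIV. G i x)"
    unfolding G_def divergence_eq_sum_partials[OF D D_cont supp] ..
  also have "\<dots> = (\<Sum>i\<in>UNIV. integral F (G i))" by (rule integral_sum) (use partial_le in auto)
  also have "\<dots> \<le> (\<Sum>i\<in>(UNIV::'n set). L)" by (intro sum_mono) (use partial_le in auto)
  finally show ?thesis by simp
qed

section \<open>The chain has locally finite perimeter\<close>

lemma emeasure_translate_open_cube_diff_le:
  fixes a :: "real^'n"
  assumes r: "0 < r" "r \<le> 1" and h: "0 < h"
  shows "emeasure lborel ({y. y - h *\<^sub>R axis i 1 \<in> open_cube a r} - open_cube a r) \<le> ennreal h"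
    and "emeasure lborel (open_cube a r - {y. y - h *\<^sub>R axis i 1 \<in> open_cube a r}) \<le> ennreal h"
proof -
  have slab: "emeasure lborel (cbox u w) \<le> ennreal h"
    if "\<And>k. w$k - u$k = (if k = i then h else r)" for u w :: "real^'n"
  proof -
    have "u$k \<le> w$k" for k using that[of k] r h by (cases "k = i") auto
    then have "emeasure lborel (cbox u w) = ennreal (\<Prod>k\<in>UNIV. if k = i then h else r)"
      by (simp add: emeasure_lborel_box_cart(2) that)
    also have "(\<Prod>k\<in>UNIV. if k = i then h else r) \<le> h"
      using mult_left_mono[OF power_le_one[of r "CARD('n) - 1"], of h] r h by (simp add: prod_if_eq_single)
    finally show ?thesis by (simp add: ennreal_leI)
  qed
  define u1 :: "real^'n" where "u1 = (\<chi> j. if j = i then a$j + r else a$j)"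
  define w1 :: "real^'n" where "w1 = (\<chi> j. if j = i then a$j + r + h else a$j + r)"
  define w2 :: "real^'n" where "w2 = (\<chi> j. if j = i then a$j + h else a$j + r)"
  have "{y. y - h *\<^sub>R axis i 1 \<in> open_cube a r} - open_cube a r \<subseteq> cbox u1 w1"
  proof
    fix y assume y: "y \<in> {y. y - h *\<^sub>R axis i 1 \<in> open_cube a r} - open_cube a r"
    then have A: "\<forall>j. a$j < y$j - h * (if j = i then 1 else 0) \<and> y$j - h * (if j = i then 1 else 0) < a$j + r"
      by (simp add: mem_box_cart axis_def)
    from y obtain j where nj: "\<not> (a$j < y$j \<and> y$j < a$j + r)" by (auto simp: mem_box_cart)
    have yi: "a$i + r \<le> y$i" using spec[OF A, of j] nj h by (cases "j = i") auto
    show "y \<in> cbox u1 w1" unfolding mem_box_cart u1_def w1_def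
    proof
      fix k show "(\<chi> j. if j = i then a$j + r else a$j) $ k \<le> y$k \<and> y$k \<le> (\<chi> j. if j = i then a$j + r + h else a$j + r) $ k"
        using spec[OF A, of k] yi by (cases "k = i") auto
    qed
  qed
  then have "emeasure lborel ({y. y - h *\<^sub>R axis i 1 \<in> open_cube a r} - open_cube a r) \<le> emeasure lborel (cbox u1 w1)"
    by (rule emeasure_mono) simp
  also have "\<dots> \<le> ennreal h" by (rule slab) (simp add: u1_def w1_def)
  finally show "emeasure lborel ({y. y - h *\<^sub>R axis i 1 \<in> open_cube a r} - open_cube a r) \<le> ennreal h" .
  have "open_cube a r - {y. y - h *\<^sub>R axis i 1 \<in> open_cube a r} \<subseteq> cbox a w2"
  proof
    fix y assume y: "y \<in> open_cube a r - {y. y - h *\<^sub>R axis i 1 \<in> open_cube a r}"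
    then have A: "\<forall>j. a$j < y$j \<and> y$j < a$j + r" by (simp add: mem_box_cart)
    from y obtain j where nj: "\<not> (a$j < y$j - h * (if j = i then 1 else 0) \<and> y$j - h * (if j = i then 1 else 0) < a$j + r)"
      by (auto simp: mem_box_cart axis_def)
    have yi: "y$i \<le> a$i + h" using spec[OF A, of j] nj h by (cases "j = i") auto
    show "y \<in> cbox a w2" unfolding mem_box_cart w2_def
    proof
      fix k show "a$k \<le> y$k \<and> y$k \<le> (\<chi> j. if j = i then a$j + h else a$j + r) $ k"
        using spec[OF A, of k] yi by (cases "k = i") auto
    qed
  qed
  then have "emeasure lborel (open_cube a r - {y. y - h *\<^sub>R axis i 1 \<in> open_cube a r}) \<le> emeasure lborel (cbox a w2)"
    by (rule emeasure_mono) simp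
  also have "\<dots> \<le> ennreal h" by (rule slab) (simp add: w2_def)
  finally show "emeasure lborel (open_cube a r - {y. y - h *\<^sub>R axis i 1 \<in> open_cube a r}) \<le> ennreal h" .
qed

lemma emeasure_translate_UN_diff_le:
  fixes A :: "nat \<Rightarrow> 'a::euclidean_space set"
  assumes [measurable]: "\<And>k. A k \<in> sets borel"
  shows "emeasure lborel ({y. y - w \<in> (\<Union>k<K. A k)} - (\<Union>k<K. A k))
      \<le> (\<Sum>k<K. emeasure lborel ({y. y - w \<in> A k} - A k))"
    and "emeasure lborel ((\<Union>k<K. A k) - {y. y - w \<in> (\<Union>k<K. A k)})
      \<le> (\<Sum>k<K. emeasure lborel (A k - {y. y - w \<in> A k}))"
proof -
  have "emeasure lborel ({y. y - w \<in> (\<Union>k<K. A k)} - (\<Union>k<K. A k))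
      \<le> emeasure lborel (\<Union>k<K. {y. y - w \<in> A k} - A k)"
    by (rule emeasure_mono) auto
  also have "\<dots> \<le> (\<Sum>k<K. emeasure lborel ({y. y - w \<in> A k} - A k))"
    by (rule emeasure_subadditive_finite) auto
  finally show "emeasure lborel ({y. y - w \<in> (\<Union>k<K. A k)} - (\<Union>k<K. A k))
      \<le> (\<Sum>k<K. emeasure lborel ({y. y - w \<in> A k} - A k))" .
  have "emeasure lborel ((\<Union>k<K. A k) - {y. y - w \<in> (\<Union>k<K. A k)})
      \<le> emeasure lborel (\<Union>k<K. A k - {y. y - w \<in> A k})"
    by (rule emeasure_mono) auto
  also have "\<dots> \<le> (\<Sum>k<K. emeasure lborel (A k - {y. y - w \<in> A k}))"
    by (rule emeasure_subadditive_finite) auto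
  finally show "emeasure lborel ((\<Union>k<K. A k) - {y. y - w \<in> (\<Union>k<K. A k)})
      \<le> (\<Sum>k<K. emeasure lborel (A k - {y. y - w \<in> A k}))" .
qed

lemma emeasure_translate_chain_diff_le:
  fixes F :: "(real^'n) set"
  assumes F_def: "F = (\<Union>k<K. chain_cube \<sigma> k)" and \<sigma>: "\<sigma> < 1" and h: "0 < h"
  shows "emeasure lborel ({y. y - h *\<^sub>R axis i 1 \<in> F} - F)
      + emeasure lborel (F - {y. y - h *\<^sub>R axis i 1 \<in> F}) \<le> ennreal (2 * real K * h)"
proof -
  have N: "1 \<le> CARD('n)" by (simp add: Suc_leI)
  have cube: "chain_cube \<sigma> k \<in> sets borel" for k :: nat by (simp add: chain_cube_def)
  have "emeasure lborel ({y. y - h *\<^sub>R axis i 1 \<in> F} - F) \<le> (\<Sum>k<K. ennreal h)"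
    using emeasure_translate_UN_diff_le(1)[where w="h *\<^sub>R axis i 1" and K=K, OF cube]
    unfolding F_def chain_cube_def
    by (rule order_trans, intro sum_mono emeasure_translate_open_cube_diff_le chain_side_pos chain_side_le_1 \<sigma> N h)
  moreover have "emeasure lborel (F - {y. y - h *\<^sub>R axis i 1 \<in> F}) \<le> (\<Sum>k<K. ennreal h)"
    using emeasure_translate_UN_diff_le(2)[where w="h *\<^sub>R axis i 1" and K=K, OF cube]
    unfolding F_def chain_cube_def
    by (rule order_trans, intro sum_mono emeasure_translate_open_cube_diff_le chain_side_pos chain_side_le_1 \<sigma> N h)
  moreover have "(\<Sum>k<K. ennreal h) + (\<Sum>k<K. ennreal h) = ennreal (2 * real K * h)"
    using h by (simp add: ennreal_of_nat_eq_real_of_nat ennreal_mult[symmetric] ennreal_plus[symmetric]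
        del: ennreal_plus)
  ultimately show ?thesis by (metis add_mono)
qed

lemma integral_cube_chain_eq_initial:
  fixes f :: "real^'n \<Rightarrow> real"
  assumes f: "\<And>x. R \<le> norm x \<Longrightarrow> f x = 0" and K: "R \<le> 3 * real K"
  shows "integral (cube_chain \<sigma>) f = integral (\<Union>k<K. chain_cube \<sigma> k) f"
proof -
  have "(\<lambda>x. if x \<in> cube_chain \<sigma> then f x else 0) = (\<lambda>x. if x \<in> (\<Union>k<K. chain_cube \<sigma> k) then f x else 0)"
  proof
    fix x :: "real^'n"
    show "(if x \<in> cube_chain \<sigma> then f x else 0) = (if x \<in> (\<Union>k<K. chain_cube \<sigma> k) then f x else 0)"
    proof (cases "x \<in> cube_chain \<sigma> \<and> x \<notin> (\<Union>k<K. chain_cube \<sigma> k)")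
      case True
      then obtain k where "x \<in> chain_cube \<sigma> k" unfolding cube_chain_def by blast
      moreover have "\<not> k < K" using True calculation by blast
      ultimately have k: "x \<in> chain_cube \<sigma> k" "K \<le> k" by simp_all
      have "R \<le> 3 * real k" using K k(2) by linarith
      also have "\<dots> < x$undefined" by (rule chain_cube_component(1)[OF k(1)])
      also have "\<dots> \<le> norm x" using component_le_norm_cart[of x undefined] by simp
      finally show ?thesis using f by simp
    qed (auto simp: cube_chain_def)
  qed
  then show ?thesis
    using integral_restrict_UNIV[of "cube_chain \<sigma>" f] integral_restrict_UNIV[of "\<Union>k<K. chain_cube \<sigma> k" f]
    by simp
qed

text \<open>A test field supported in \<open>ball 0 R\<close> only sees the first \<open>K\<close> cubes, whose union has
  translation defect at most \<open>2 K h\<close> in each coordinate direction.\<close>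

lemma caccioppoli_cube_chain:
  assumes "\<sigma> < 1"
  shows "caccioppoli (cube_chain \<sigma> :: (real^'n) set)"
  unfolding caccioppoli_def
proof (intro conjI allI)
  show "cube_chain \<sigma> \<in> sets (lebesgue :: (real^'n) measure)"
    unfolding cube_chain_def chain_cube_def by (intro sets.countable_UN) auto
  fix R :: real
  define K where "K = nat \<lceil>R\<rceil> + 1"
  have "R \<le> real (nat \<lceil>R\<rceil>)" "0 \<le> real (nat \<lceil>R\<rceil>)" by (simp_all add: real_nat_ceiling_ge)
  then have K: "R \<le> 3 * real K" unfolding K_def by simp
  define F where "F = (\<Union>k<K. chain_cube \<sigma> k :: (real^'n) set)"
  have F_borel: "F \<in> sets borel" unfolding F_def chain_cube_def by (intro sets.finite_UN) auto
  have F_fin: "emeasure lborel F < \<infinity>"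
  proof -
    have "emeasure lborel F \<le> (\<Sum>k<K. emeasure lborel (chain_cube \<sigma> k :: (real^'n) set))"
      unfolding F_def by (rule emeasure_subadditive_finite) (auto simp: chain_cube_def)
    also have "\<dots> < \<infinity>" by (simp add: emeasure_chain_cube less_top[symmetric])
    finally show ?thesis .
  qed
  have bound: "integral (cube_chain \<sigma>) (divergence \<phi>) \<le> real CARD('n) * (2 * real K)"
    if \<phi>: "C1c_field (ball 0 R) \<phi>" and \<phi>_le: "\<forall>x. norm (\<phi> x) \<le> 1" for \<phi> :: "real^'n \<Rightarrow> real^'n"
  proof -
    have "integral (cube_chain \<sigma>) (divergence \<phi>) = integral F (divergence \<phi>)"
      unfolding F_def by (rule integral_cube_chain_eq_initial[OF C1c_field_divergence_eq_0[OF \<phi>] K])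
    also have "\<dots> \<le> real CARD('n) * (2 * real K)"
      using \<phi>_le emeasure_translate_chain_diff_le[OF F_def assms]
      by (intro integral_divergence_le[OF \<phi> _ F_borel F_fin]) auto
    finally show ?thesis .
  qed
  show "\<exists>B. \<forall>\<phi>. C1c_field (ball 0 R) \<phi> \<and> (\<forall>x. norm (\<phi> x) \<le> 1)
      \<longrightarrow> integral (cube_chain \<sigma> :: (real^'n) set) (divergence \<phi>) \<le> B"
    using bound by blast
qed

theorem proposition1p2:
  fixes \<sigma> :: real
  assumes "CARD('n::finite) \<ge> 2" and "0 < \<sigma>" and "\<sigma> < 1"
  shows "\<exists>E :: (real^'n) set. caccioppoli E \<and>
           (\<forall>s. 0 < s \<and> s < \<sigma> \<longrightarrow> frac_perimeter s E < \<infinity>) \<and>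
           (\<forall>s. \<sigma> \<le> s \<and> s < 1 \<longrightarrow> frac_perimeter s E = \<infinity>)"
  using caccioppoli_cube_chain[OF assms(3)] frac_perimeter_cube_chain_finite[OF _ _ assms(3)]
    frac_perimeter_cube_chain_infinite[OF _ _ assms(2)]
  by blast

end
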